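(* Let $p_0, p_1, p_2, \ldots$ be a sequence of probability densities on $\mathbb{R}$, where for each $i \geq 0$ the density $p_i$ (the one-step-ahead predictive density of $Y_{i+1}$ given $y_{1:i}$) may depend on the observations $y_{1:i}$, and let $P_i$ denote the distribution function of $p_i$. Then the sequence satisfies the martingale condition $$\int p_{i+1}(y)\, p_{i}(y_{i+1})\, dy_{i+1} = p_{i}(y) \quad \text{for each } y \in \mathbb{R} \text{ and each } i \geq 0$$ (where $p_{i+1}$ depends on $y_{i+1}$) if and only if there exists a unique sequence of bivariate copula densities $c_1, c_2, \ldots$ such that $$p_{i+1}(y) = c_{i+1}\{P_i(y), P_i(y_{i+1})\}\, p_i(y)$$ for all $i \in \{0,1,\ldots\}$.
   Context: A bivariate copula is a bivariate cumulative distribution function on $[0,1]^2$ with uniform marginals; a bivariate copula density is its density $c:[0,1]^2 \to [0,\infty)$. The copula densities $c_{i+1}$ may depend on $y_{1:i}$. *)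

theory Defs
  imports "HOL-Analysis.Analysis"
begin

definition prob_density :: "(real \<Rightarrow> real) \<Rightarrow> bool" where
  "prob_density f \<longleftrightarrow> f \<in> borel_measurable lborel \<and> (\<forall>x. 0 \<le> f x)
     \<and> (\<integral>\<^sup>+ x. ennreal (f x) \<partial>lborel) = 1"

definition dens_cdf :: "(real \<Rightarrow> real) \<Rightarrow> real \<Rightarrow> real" where
  "dens_cdf f y = (LINT x:{..y}|lborel. f x)"

definition biv_cdf :: "(real \<Rightarrow> real \<Rightarrow> real) \<Rightarrow> real \<Rightarrow> real \<Rightarrow> ennreal" where
  "biv_cdf c a b = (\<integral>\<^sup>+ w. indicator ({0..a} \<times> {0..b}) w * ennreal (c (fst w) (snd w))
                       \<partial>(lborel \<Otimes>\<^sub>M lborel))"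

definition copula_density :: "(real \<Rightarrow> real \<Rightarrow> real) \<Rightarrow> bool" where
  "copula_density c \<longleftrightarrow> (\<lambda>w. c (fst w) (snd w)) \<in> borel_measurable (lborel \<Otimes>\<^sub>M lborel)
     \<and> (\<forall>u\<in>{0..1}. \<forall>v\<in>{0..1}. 0 \<le> c u v)
     \<and> (\<forall>a\<in>{0..1}. biv_cdf c a 1 = ennreal a \<and> biv_cdf c 1 a = ennreal a)"

text \<open>p i ys y: the predictive density of Y_{i+1} at y given the observations ys = y_{1:i}
  (only lists of length i are meaningful).  Martingale condition (densities read a.e.).\<close>
definition martingale_cond :: "(nat \<Rightarrow> real list \<Rightarrow> real \<Rightarrow> real) \<Rightarrow> bool" where
  "martingale_cond p \<longleftrightarrow> (\<forall>i ys. length ys = i \<longrightarrow>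
     (AE y in lborel. (\<integral>z. p (Suc i) (ys @ [z]) y * p i ys z \<partial>lborel) = p i ys y))"

text \<open>c (Suc i) ys is the copula density c_{i+1} (depending on ys = y_{1:i}).
  The update p_{i+1}(y) = c_{i+1}(P_i y, P_i y_{i+1}) p_i(y) holds for almost every (y, y_{i+1})
  with p_i(y_{i+1}) > 0 (the conditional density is only determined there).\<close>
definition copula_rep :: "(nat \<Rightarrow> real list \<Rightarrow> real \<Rightarrow> real) \<Rightarrow>
    (nat \<Rightarrow> real list \<Rightarrow> real \<Rightarrow> real \<Rightarrow> real) \<Rightarrow> bool" where
  "copula_rep p c \<longleftrightarrow> (\<forall>i ys. length ys = i \<longrightarrow>
     copula_density (c (Suc i) ys) \<and>
     (AE w in lborel \<Otimes>\<^sub>M lborel. p i ys (snd w) \<noteq> 0 \<longrightarrow>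
        p (Suc i) (ys @ [snd w]) (fst w) =
          c (Suc i) ys (dens_cdf (p i ys) (fst w)) (dens_cdf (p i ys) (snd w)) * p i ys (fst w)))"

end

theory Submission
  imports Defs "HOL-Probability.Probability"
begin

(*
  Fix y_{1:i} and write p, P, Q for p_i, its distribution function and its quantile function,
  and q z for p_{i+1} after observing y_{i+1} = z.  The only candidate copula density is
  c(u, v) = q (Q v) (Q u) / p (Q u): by the probability integral transform (P pushes p forward
  to the uniform distribution on (0, 1), Q pushes the uniform distribution back to p), the
  relation q z y = c(P y, P z) p y determines c almost everywhere on the unit square.
  For u = P y the row integral of c(u, v) over v equals the integral of q z y p z dz divided
  by p y, so the first marginal of c is uniform exactly when the martingale condition holds.
  The second marginal is then automatic: every column integral is at most the total mass 1
  of q z, and the column integrals average to 1.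
*)

section \<open>Distribution and quantile functions of a density\<close>

definition dens_measure :: "(real \<Rightarrow> real) \<Rightarrow> real measure" where
  "dens_measure p = density lborel (\<lambda>x. ennreal (p x))"

definition uniform01 :: "real measure" where
  "uniform01 = density lborel (indicator {0<..<1})"

definition dens_quantile :: "(real \<Rightarrow> real) \<Rightarrow> real \<Rightarrow> real" where
  "dens_quantile p u = (if 0 < u \<and> u < 1 then Inf {x. u \<le> dens_cdf p x} else 0)"

lemma prob_space_uniform01: "prob_space uniform01"
  unfolding uniform01_def
  by (rule prob_spaceI) (simp add: emeasure_density nn_integral_indicator)

lemma sets_uniform01[simp, measurable_cong]: "sets uniform01 = sets borel"
  by (simp add: uniform01_def)

lemma measure_uniform01:
  assumes "A \<in> sets borel"
  shows "measure uniform01 A = measure lborel (A \<inter> {0<..<1})"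
proof -
  have "emeasure uniform01 A = (\<integral>\<^sup>+ x. indicator {0<..<1::real} x * indicator A x \<partial>lborel)"
    unfolding uniform01_def using assms by (subst emeasure_density) auto
  also have "\<dots> = (\<integral>\<^sup>+ x. indicator (A \<inter> {0<..<1}) x \<partial>lborel)"
    by (rule nn_integral_cong) (simp split: split_indicator)
  also have "\<dots> = emeasure lborel (A \<inter> {0<..<1})"
    using assms by (simp add: nn_integral_indicator)
  finally show ?thesis by (simp add: measure_def)
qed

lemma AE_uniform01: "(AE u in uniform01. X u) \<longleftrightarrow> (AE u in lborel. 0 < u \<and> u < 1 \<longrightarrow> X u)"
  unfolding uniform01_def by (subst AE_density) (auto simp: indicator_def)

lemma uniform01_pair:
  "uniform01 \<Otimes>\<^sub>M uniform01 =
     density (lborel \<Otimes>\<^sub>M lborel) (\<lambda>(x, y). indicator {0<..<1} x * indicator {0<..<1::real} y)"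
  unfolding uniform01_def
  by (rule pair_measure_density) (auto intro: lborel.sigma_finite_measure_axioms
      prob_space_uniform01[unfolded uniform01_def] prob_space_imp_sigma_finite)

locale real_density =
  fixes p :: "real \<Rightarrow> real"
  assumes prob_density: "prob_density p"
begin

abbreviation "P \<equiv> dens_cdf p"
abbreviation "Q \<equiv> dens_quantile p"

lemma borel_measurable_p[measurable]: "p \<in> borel_measurable borel"
  using prob_density unfolding prob_density_def by (simp add: measurable_lborel1)

lemma p_nonneg: "0 \<le> p x"
  using prob_density unfolding prob_density_def by simp

lemma nn_integral_p: "(\<integral>\<^sup>+ x. ennreal (p x) \<partial>lborel) = 1"
  using prob_density unfolding prob_density_def by simp

lemma integrable_p: "integrable lborel p"
  by (intro integrableI_nonneg) (auto simp: p_nonneg nn_integral_p)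

lemma sets_dens_measure[simp, measurable_cong]: "sets (dens_measure p) = sets borel"
  by (simp add: dens_measure_def)

lemma prob_space_dens_measure: "prob_space (dens_measure p)"
  unfolding dens_measure_def by (rule prob_spaceI) (simp add: emeasure_density nn_integral_p)

lemma real_distribution_dens_measure: "real_distribution (dens_measure p)"
  using prob_space_dens_measure by (simp add: real_distribution_def real_distribution_axioms_def)

lemma AE_dens_measure: "(AE y in dens_measure p. X y) \<longleftrightarrow> (AE y in lborel. 0 < p y \<longrightarrow> X y)"
  unfolding dens_measure_def by (subst AE_density) auto

lemma dens_cdf_eq_cdf: "P = cdf (dens_measure p)"
proof
  fix y
  have "cdf (dens_measure p) y = enn2real (\<integral>\<^sup>+ x. ennreal (indicator {..y} x * p x) \<partial>lborel)"
    unfolding cdf_def dens_measure_def measure_def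
    by (simp add: emeasure_density) (auto intro!: arg_cong[where f=enn2real] nn_integral_cong
        simp: indicator_def)
  also have "(\<integral>\<^sup>+ x. ennreal (indicator {..y} x * p x) \<partial>lborel)
      = ennreal (LINT x|lborel. indicator {..y} x * p x)"
    using integrable_mult_indicator[OF _ integrable_p, of "{..y}"]
    by (intro nn_integral_eq_integral) (auto simp: p_nonneg)
  finally show "P y = cdf (dens_measure p) y"
    using integral_nonneg[of "\<lambda>x. indicator {..y} x * p x"]
    by (simp add: dens_cdf_def set_lebesgue_integral_def p_nonneg)
qed

lemma dens_cdf_mono: "x \<le> y \<Longrightarrow> P x \<le> P y"
  unfolding dens_cdf_eq_cdf using real_distribution_dens_measure
  by (simp add: real_distribution.finite_borel_measure_M finite_borel_measure.cdf_nondecreasing)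

lemma dens_cdf_nonneg: "0 \<le> P x"
  unfolding dens_cdf_eq_cdf by (simp add: cdf_def)

lemma dens_cdf_le_1: "P x \<le> 1"
  unfolding dens_cdf_eq_cdf using real_distribution_dens_measure
  by (simp add: real_distribution.cdf_bounded_prob)

lemma dens_cdf_at_top: "(P \<longlongrightarrow> 1) at_top"
  unfolding dens_cdf_eq_cdf using real_distribution_dens_measure
  by (simp add: real_distribution.cdf_lim_at_top_prob)

lemma dens_cdf_at_bot: "(P \<longlongrightarrow> 0) at_bot"
  unfolding dens_cdf_eq_cdf using real_distribution_dens_measure
  by (simp add: real_distribution.finite_borel_measure_M finite_borel_measure.cdf_lim_at_bot)

lemma isCont_dens_cdf: "isCont P x"
proof -
  have "emeasure (dens_measure p) {x} = (\<integral>\<^sup>+ y. ennreal (p y) * indicator {x} y \<partial>lborel)"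
    unfolding dens_measure_def by (simp add: emeasure_density)
  also have "\<dots> = 0"
    using AE_lborel_singleton[of x] by (subst nn_integral_0_iff_AE) (auto elim!: eventually_mono)
  finally have "measure (dens_measure p) {x} = 0" by (simp add: measure_def)
  then show ?thesis unfolding dens_cdf_eq_cdf using real_distribution_dens_measure
    by (simp add: real_distribution.finite_borel_measure_M finite_borel_measure.isCont_cdf)
qed

lemma continuous_on_dens_cdf: "continuous_on A P"
  using isCont_dens_cdf by (simp add: continuous_at_imp_continuous_on)

lemma borel_measurable_dens_cdf[measurable]: "P \<in> borel_measurable borel"
  using continuous_on_dens_cdf[of UNIV] by (simp add: borel_measurable_continuous_onI)

lemma dens_quantile:
  assumes u: "0 < u" "u < 1"
  shows dens_cdf_dens_quantile: "P (Q u) = u"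
    and dens_quantile_le_iff: "Q u \<le> y \<longleftrightarrow> u \<le> P y"
proof -
  define S where "S = {x. u \<le> P x}"
  have Q: "Q u = Inf S" using u by (simp add: dens_quantile_def S_def)
  obtain a where a: "\<And>x. x \<ge> a \<Longrightarrow> u < P x"
    using order_tendstoD(1)[OF dens_cdf_at_top u(2)] by (auto simp: eventually_at_top_linorder)
  obtain b where b: "\<And>x. x \<le> b \<Longrightarrow> P x < u"
    using order_tendstoD(2)[OF dens_cdf_at_bot u(1)] by (auto simp: eventually_at_bot_linorder)
  have "a \<in> S" using a[of a] by (simp add: S_def)
  then have "S \<noteq> {}" by blast
  moreover have bdd: "bdd_below S"
    unfolding bdd_below_def S_def by (metis b linorder_not_le mem_Collect_eq order_less_imp_le)
  moreover have "closed S"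
    unfolding S_def by (intro closed_Collect_le continuous_on_const continuous_on_dens_cdf)
  ultimately have inS: "Inf S \<in> S" by (rule closed_contains_Inf)
  show iff: "Q u \<le> y \<longleftrightarrow> u \<le> P y" for y
  proof
    assume "Q u \<le> y"
    then show "u \<le> P y" using inS Q dens_cdf_mono[of "Inf S" y] by (auto simp: S_def)
  next
    assume "u \<le> P y"
    then show "Q u \<le> y" using Q bdd by (auto simp: S_def intro: cInf_lower)
  qed
  have "b \<le> Inf S"
    using inS b by (metis S_def linorder_not_le mem_Collect_eq order_less_imp_le)
  then have "\<exists>x. b \<le> x \<and> x \<le> Inf S \<and> P x = u"
    by (intro IVT') (use b[of b] inS continuous_on_dens_cdf in \<open>auto simp: S_def\<close>)
  then obtain x where x: "x \<le> Inf S" "P x = u" by blast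
  with iff[of x] Q show "P (Q u) = u" by simp
qed

lemma borel_measurable_dens_quantile[measurable]: "Q \<in> borel_measurable borel"
proof (rule borel_measurable_piecewise_mono[of "{{..0}, {0<..<1}, {1..}}"])
  have "mono_on {0<..<1} Q"
    by (rule mono_onI) (simp add: dens_quantile_le_iff dens_cdf_dens_quantile)
  moreover have "mono_on {..0} Q" "mono_on {1..} Q"
    by (auto intro!: mono_onI simp: dens_quantile_def)
  ultimately show "mono_on C Q" if "C \<in> {{..0}, {0<..<1}, {1..}}" for C
    using that by auto
qed auto

lemma dens_measure_eq_distr_quantile: "dens_measure p = distr uniform01 lborel Q"
proof (rule cdf_unique[OF real_distribution_dens_measure])
  show "real_distribution (distr uniform01 lborel Q)"
    unfolding real_distribution_def real_distribution_axioms_def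
    by (auto intro!: prob_space.prob_space_distr prob_space_uniform01)
  show "cdf (dens_measure p) = cdf (distr uniform01 lborel Q)"
  proof
    fix y
    have "cdf (distr uniform01 lborel Q) y = measure uniform01 (Q -` {..y})"
      unfolding cdf_def by (subst measure_distr) (auto simp: uniform01_def)
    also have "\<dots> = measure lborel (Q -` {..y} \<inter> {0<..<1})"
      using measurable_sets[OF borel_measurable_dens_quantile, of "{..y}"]
      by (intro measure_uniform01) simp
    also have "Q -` {..y} \<inter> {0<..<1} = {0<..<1} \<inter> {..P y}"
      using dens_quantile_le_iff by auto
    also have "measure lborel ({0<..<1} \<inter> {..P y}) = P y"
    proof (cases "P y < 1")
      case True
      then have "{0<..<1} \<inter> {..P y} = {0<..P y}" by auto
      then show ?thesis using dens_cdf_nonneg[of y] by simp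
    next
      case False
      then have "P y = 1" using dens_cdf_le_1[of y] by simp
      moreover have "{0<..<1} \<inter> {..1::real} = {0<..<1}" by auto
      ultimately show ?thesis by simp
    qed
    finally show "cdf (dens_measure p) y = cdf (distr uniform01 lborel Q) y"
      by (simp add: dens_cdf_eq_cdf)
  qed
qed

lemma distr_dens_cdf_eq_uniform01: "distr (dens_measure p) lborel P = uniform01"
proof -
  have "distr (dens_measure p) lborel P = distr uniform01 lborel (\<lambda>u. P (Q u))"
    unfolding dens_measure_eq_distr_quantile
    by (subst distr_distr) (auto simp: uniform01_def comp_def)
  also have "\<dots> = distr uniform01 lborel (\<lambda>u. u)"
    by (rule distr_cong_AE) (auto simp: AE_uniform01 dens_cdf_dens_quantile uniform01_def)
  also have "\<dots> = uniform01" by (rule distr_id2) (simp add: uniform01_def)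
  finally show ?thesis .
qed

lemma AE_dens_quantile_if_AE:
  assumes "{x. X x} \<in> sets borel" and "AE y in lborel. 0 < p y \<longrightarrow> X y"
  shows "AE u in lborel. 0 < u \<and> u < 1 \<longrightarrow> X (Q u)"
proof -
  have "AE u in uniform01. X (Q u)"
    using assms unfolding AE_dens_measure[symmetric] dens_measure_eq_distr_quantile
    by (subst (asm) AE_distr_iff) (auto simp: uniform01_def)
  then show ?thesis by (simp add: AE_uniform01)
qed

lemma AE_dens_cdf_if_AE:
  assumes "{x. X x} \<in> sets borel" and "AE u in lborel. 0 < u \<and> u < 1 \<longrightarrow> X u"
  shows "AE y in lborel. 0 < p y \<longrightarrow> X (P y)"
proof -
  have "AE y in dens_measure p. X (P y)"
    using assms unfolding AE_uniform01[symmetric] distr_dens_cdf_eq_uniform01[symmetric]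
    by (subst (asm) AE_distr_iff) (auto simp: dens_measure_def)
  then show ?thesis by (simp add: AE_dens_measure)
qed

lemma AE_dens_quantile_dens_cdf: "AE y in lborel. 0 < p y \<longrightarrow> Q (P y) = y \<and> 0 < P y \<and> P y < 1"
proof -
  have "AE u in uniform01. Q (P (Q u)) = Q u \<and> 0 < P (Q u) \<and> P (Q u) < 1"
    by (simp add: AE_uniform01 dens_cdf_dens_quantile)
  then have "AE y in dens_measure p. Q (P y) = y \<and> 0 < P y \<and> P y < 1"
    unfolding dens_measure_eq_distr_quantile by (subst AE_distr_iff) (auto simp: uniform01_def)
  then show ?thesis by (subst (asm) AE_dens_measure)
qed

lemma nn_integral_dens_cdf_subst:
  assumes [measurable]: "g \<in> borel_measurable borel"
  shows "(\<integral>\<^sup>+ y. ennreal (p y) * g (P y) \<partial>lborel) = (\<integral>\<^sup>+ u. indicator {0<..<1} u * g u \<partial>lborel)"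
proof -
  have "(\<integral>\<^sup>+ y. ennreal (p y) * g (P y) \<partial>lborel) = (\<integral>\<^sup>+ y. g (P y) \<partial>dens_measure p)"
    unfolding dens_measure_def by (subst nn_integral_density) auto
  also have "\<dots> = (\<integral>\<^sup>+ u. g u \<partial>distr (dens_measure p) lborel P)"
    by (subst nn_integral_distr) (auto simp: dens_measure_def)
  also have "\<dots> = (\<integral>\<^sup>+ u. indicator {0<..<1} u * g u \<partial>lborel)"
    unfolding distr_dens_cdf_eq_uniform01 uniform01_def by (subst nn_integral_density) auto
  finally show ?thesis .
qed

lemma nn_integral_dens_quantile_subst:
  assumes [measurable]: "f \<in> borel_measurable borel"
  shows "(\<integral>\<^sup>+ y. ennreal (p y) * f y \<partial>lborel) = (\<integral>\<^sup>+ u. indicator {0<..<1} u * f (Q u) \<partial>lborel)"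
proof -
  have "(\<integral>\<^sup>+ y. ennreal (p y) * f y \<partial>lborel) = (\<integral>\<^sup>+ y. f y \<partial>dens_measure p)"
    unfolding dens_measure_def by (subst nn_integral_density) auto
  also have "\<dots> = (\<integral>\<^sup>+ u. f (Q u) \<partial>uniform01)"
    unfolding dens_measure_eq_distr_quantile by (subst nn_integral_distr) (auto simp: uniform01_def)
  also have "\<dots> = (\<integral>\<^sup>+ u. indicator {0<..<1} u * f (Q u) \<partial>lborel)"
    unfolding uniform01_def by (subst nn_integral_density) auto
  finally show ?thesis .
qed

lemma dens_measure_pair:
  "dens_measure p \<Otimes>\<^sub>M dens_measure p =
     density (lborel \<Otimes>\<^sub>M lborel) (\<lambda>(x, y). ennreal (p x) * ennreal (p y))"
  unfolding dens_measure_def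
  by (rule pair_measure_density) (auto intro: lborel.sigma_finite_measure_axioms
      prob_space_dens_measure[unfolded dens_measure_def] prob_space_imp_sigma_finite)

lemma distr_dens_cdf_pair_eq_uniform01_pair:
  "distr (dens_measure p \<Otimes>\<^sub>M dens_measure p) (lborel \<Otimes>\<^sub>M lborel) (\<lambda>(x, y). (P x, P y))
     = uniform01 \<Otimes>\<^sub>M uniform01"
proof -
  have "distr (dens_measure p) lborel P \<Otimes>\<^sub>M distr (dens_measure p) lborel P
      = distr (dens_measure p \<Otimes>\<^sub>M dens_measure p) (lborel \<Otimes>\<^sub>M lborel) (\<lambda>(x, y). (P x, P y))"
    by (rule pair_measure_distr)
      (auto simp: distr_dens_cdf_eq_uniform01 measurable_cong_sets[OF sets_dens_measure refl]
        intro: prob_space_uniform01 prob_space_imp_sigma_finite)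
  then show ?thesis by (simp add: distr_dens_cdf_eq_uniform01)
qed

lemma AE_pair_uniform_if_AE_pair_dens_cdf:
  assumes E: "{w. E w} \<in> sets (borel \<Otimes>\<^sub>M borel)"
    and ae: "AE w in lborel \<Otimes>\<^sub>M lborel. 0 < p (fst w) \<and> 0 < p (snd w) \<longrightarrow>
               E (P (fst w), P (snd w))"
  shows "AE w in lborel \<Otimes>\<^sub>M lborel. 0 < fst w \<and> fst w < 1 \<and> 0 < snd w \<and> snd w < 1 \<longrightarrow> E w"
proof -
  have "AE w in dens_measure p \<Otimes>\<^sub>M dens_measure p. E (P (fst w), P (snd w))"
    unfolding dens_measure_pair using ae
    by (subst AE_density) (auto simp: split_beta ennreal_zero_less_mult_iff elim!: eventually_mono)
  then have "AE w in uniform01 \<Otimes>\<^sub>M uniform01. E w"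
    unfolding distr_dens_cdf_pair_eq_uniform01_pair[symmetric] using E
    by (subst AE_distr_iff) (auto simp: split_beta dens_measure_def space_pair_measure)
  then show ?thesis unfolding uniform01_pair
    by (subst (asm) AE_density)
      (auto simp: split_beta ennreal_zero_less_mult_iff elim!: eventually_mono)
qed

end

section \<open>Copula densities\<close>

lemma AE_lborel_not_0_1: "AE v in lborel. v \<noteq> 0 \<and> v \<noteq> (1::real)"
  using AE_lborel_singleton[of 0] AE_lborel_singleton[of 1] by eventually_elim auto

lemma AE_pair_lborel_not_0_1:
  "AE (w::real \<times> real) in lborel \<Otimes>\<^sub>M lborel. fst w \<noteq> 0 \<and> fst w \<noteq> 1 \<and> snd w \<noteq> 0 \<and> snd w \<noteq> 1"
proof -
  have "AE (x::real) in lborel. AE y in lborel. x \<noteq> 0 \<and> x \<noteq> 1 \<and> y \<noteq> 0 \<and> y \<noteq> (1::real)"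
  proof (rule eventually_mono[OF AE_lborel_not_0_1])
    fix x :: real assume "x \<noteq> 0 \<and> x \<noteq> 1"
    then show "AE y in lborel. x \<noteq> 0 \<and> x \<noteq> 1 \<and> y \<noteq> 0 \<and> y \<noteq> (1::real)"
      by (intro eventually_mono[OF AE_lborel_not_0_1]) auto
  qed
  moreover have "{w \<in> space (lborel \<Otimes>\<^sub>M lborel). fst w \<noteq> 0 \<and> fst w \<noteq> 1 \<and> snd w \<noteq> 0 \<and> snd w \<noteq> (1::real)}
      \<in> sets (lborel \<Otimes>\<^sub>M lborel)" by measurable
  ultimately show ?thesis
    using lborel_pair.AE_pair_iff[of "\<lambda>x y. x \<noteq> 0 \<and> x \<noteq> 1 \<and> y \<noteq> 0 \<and> y \<noteq> (1::real)"] by blast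
qed

lemma biv_cdf_iterated_fst:
  assumes [measurable]: "(\<lambda>w. c (fst w) (snd w)) \<in> borel_measurable (lborel \<Otimes>\<^sub>M lborel)"
  shows "biv_cdf c a b = (\<integral>\<^sup>+ u. indicator {0..a} u *
            (\<integral>\<^sup>+ v. indicator {0..b} v * ennreal (c u v) \<partial>lborel) \<partial>lborel)"
proof -
  have "biv_cdf c a b
      = (\<integral>\<^sup>+ u. \<integral>\<^sup>+ v. indicator ({0..a} \<times> {0..b}) (u, v) * ennreal (c u v) \<partial>lborel \<partial>lborel)"
    unfolding biv_cdf_def by (subst lborel.nn_integral_fst[symmetric]) auto
  also have "\<dots> = (\<integral>\<^sup>+ u. indicator {0..a} u *
            (\<integral>\<^sup>+ v. indicator {0..b} v * ennreal (c u v) \<partial>lborel) \<partial>lborel)"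
  proof (rule nn_integral_cong)
    fix u
    have [measurable]: "c u \<in> borel_measurable lborel"
      using measurable_Pair2[OF assms, of u] by simp
    show "(\<integral>\<^sup>+ v. indicator ({0..a} \<times> {0..b}) (u, v) * ennreal (c u v) \<partial>lborel)
        = indicator {0..a} u * (\<integral>\<^sup>+ v. indicator {0..b} v * ennreal (c u v) \<partial>lborel)"
      by (subst nn_integral_cmult[symmetric])
        (auto intro!: nn_integral_cong simp: indicator_times mult.assoc)
  qed
  finally show ?thesis .
qed

lemma biv_cdf_iterated_snd:
  assumes [measurable]: "(\<lambda>w. c (fst w) (snd w)) \<in> borel_measurable (lborel \<Otimes>\<^sub>M lborel)"
  shows "biv_cdf c a b = (\<integral>\<^sup>+ v. indicator {0..b} v *
            (\<integral>\<^sup>+ u. indicator {0..a} u * ennreal (c u v) \<partial>lborel) \<partial>lborel)"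
proof -
  have "biv_cdf c a b
      = (\<integral>\<^sup>+ v. \<integral>\<^sup>+ u. indicator ({0..a} \<times> {0..b}) (u, v) * ennreal (c u v) \<partial>lborel \<partial>lborel)"
    unfolding biv_cdf_def by (subst lborel_pair.nn_integral_snd[symmetric]) auto
  also have "\<dots> = (\<integral>\<^sup>+ v. indicator {0..b} v *
            (\<integral>\<^sup>+ u. indicator {0..a} u * ennreal (c u v) \<partial>lborel) \<partial>lborel)"
  proof (rule nn_integral_cong)
    fix v
    have [measurable]: "(\<lambda>u. c u v) \<in> borel_measurable lborel"
      using measurable_Pair1[OF assms, of v] by simp
    show "(\<integral>\<^sup>+ u. indicator ({0..a} \<times> {0..b}) (u, v) * ennreal (c u v) \<partial>lborel)
        = indicator {0..b} v * (\<integral>\<^sup>+ u. indicator {0..a} u * ennreal (c u v) \<partial>lborel)"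
      by (subst nn_integral_cmult[symmetric])
        (auto intro!: nn_integral_cong simp: indicator_times mult.assoc mult.left_commute)
  qed
  finally show ?thesis .
qed

lemma nn_integral_interval_eq_if_le_1:
  fixes h :: "real \<Rightarrow> ennreal"
  assumes [measurable]: "h \<in> borel_measurable lborel"
    and le_1: "\<And>v. h v \<le> 1"
    and total: "(\<integral>\<^sup>+ v. indicator {0..1} v * h v \<partial>lborel) = 1"
    and a: "0 \<le> a" "a \<le> 1"
  shows "(\<integral>\<^sup>+ v. indicator {0..a} v * h v \<partial>lborel) = ennreal a"
proof -
  define X where "X = (\<integral>\<^sup>+ v. indicator {0..a} v * h v \<partial>lborel)"
  define Y where "Y = (\<integral>\<^sup>+ v. indicator {a<..1} v * h v \<partial>lborel)"
  have "X \<le> (\<integral>\<^sup>+ v. indicator {0..a} v \<partial>lborel)"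
    unfolding X_def by (intro nn_integral_mono) (use le_1 in \<open>auto simp: indicator_def\<close>)
  then obtain x where x: "X = ennreal x" "0 \<le> x" "x \<le> a"
    using a by (cases X) (auto simp: top_unique)
  have "Y \<le> (\<integral>\<^sup>+ v. indicator {a<..1} v \<partial>lborel)"
    unfolding Y_def by (intro nn_integral_mono) (use le_1 in \<open>auto simp: indicator_def\<close>)
  then obtain y where y: "Y = ennreal y" "0 \<le> y" "y \<le> 1 - a"
    using a by (cases Y) (auto simp: top_unique)
  have "X + Y = (\<integral>\<^sup>+ v. indicator {0..a} v * h v + indicator {a<..1} v * h v \<partial>lborel)"
    unfolding X_def Y_def by (subst nn_integral_add) auto
  also have "\<dots> = (\<integral>\<^sup>+ v. indicator {0..1} v * h v \<partial>lborel)"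
    using a by (intro nn_integral_cong) (auto simp: indicator_def)
  finally have "x + y = 1"
    using total x y by (simp add: ennreal_plus[symmetric] del: ennreal_plus)
  then show ?thesis using x y X_def by simp
qed

lemma density_unit_interval_cdf:
  fixes h :: "real \<Rightarrow> ennreal"
  assumes [measurable]: "h \<in> borel_measurable borel"
    and H: "\<And>a. 0 \<le> a \<Longrightarrow> a \<le> 1 \<Longrightarrow> (\<integral>\<^sup>+ u. indicator {0..a} u * h u \<partial>lborel) = ennreal a"
  shows "real_distribution (density lborel (\<lambda>u. indicator {0..1} u * h u))" (is "real_distribution ?M")
    and "cdf (density lborel (\<lambda>u. indicator {0..1} u * h u)) x = max 0 (min 1 x)"
proof -
  define M where "M = ?M"

  have emeasure_atMost: "emeasure M {..x} = ennreal (max 0 (min 1 x))" for x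
  proof -
    have "emeasure M {..x} = (\<integral>\<^sup>+ u. indicator {0..1} u * h u * indicator {..x} u \<partial>lborel)"
      unfolding M_def by (subst emeasure_density) auto
    also have "\<dots> = ennreal (max 0 (min 1 x))"
    proof (cases "x < 0")
      case True
      then show ?thesis by (auto intro: nn_integral_zero' simp: indicator_def)
    next
      case False
      then have "(\<integral>\<^sup>+ u. indicator {0..1} u * h u * indicator {..x} u \<partial>lborel)
          = (\<integral>\<^sup>+ u. indicator {0..min 1 x} u * h u \<partial>lborel)"
        by (intro nn_integral_cong) (auto simp: indicator_def)
      with False show ?thesis by (simp add: H)
    qed
    finally show ?thesis .
  qed
  have "emeasure M UNIV = 1"
    using H[of 1] unfolding M_def by (subst emeasure_density) auto
  then show "real_distribution ?M"
    unfolding real_distribution_def real_distribution_axioms_def M_def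
    by (auto intro!: prob_spaceI)

  show "cdf ?M x = max 0 (min 1 x)"
    unfolding M_def[symmetric] cdf_def measure_def emeasure_atMost by (rule enn2real_ennreal) simp
qed

lemma AE_eq_1_if_interval_integrals:
  fixes h :: "real \<Rightarrow> ennreal"
  assumes [measurable]: "h \<in> borel_measurable borel"
    and H: "\<And>a. 0 \<le> a \<Longrightarrow> a \<le> 1 \<Longrightarrow> (\<integral>\<^sup>+ u. indicator {0..a} u * h u \<partial>lborel) = ennreal a"
  shows "AE u in lborel. u \<in> {0..1} \<longrightarrow> h u = 1"
proof -
  have H1: "(\<integral>\<^sup>+ u. indicator {0..a} u * (\<lambda>_. 1) u \<partial>lborel) = ennreal a"
    if "0 \<le> a" "a \<le> 1" for a :: real
    using that by simp
  have h: "real_distribution (density lborel (\<lambda>u. indicator {0..1} u * h u))"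
      "cdf (density lborel (\<lambda>u. indicator {0..1} u * h u)) x = max 0 (min 1 x)" for x
    by (rule density_unit_interval_cdf[OF assms(1)], rule H, assumption+)+
  have one: "real_distribution (density lborel (\<lambda>u. indicator {0..1} u * (\<lambda>_. 1) u))"
      "cdf (density lborel (\<lambda>u. indicator {0..1} u * (\<lambda>_. 1) u)) x = max 0 (min 1 x)" for x
    using density_unit_interval_cdf[of "\<lambda>_. 1"] H1 by auto
  have "density lborel (\<lambda>u. indicator {0..1} u * h u)
      = density lborel (\<lambda>u. indicator {0..1} u * (\<lambda>_. 1) u)"
    by (rule cdf_unique[OF h(1) one(1)]) (rule ext, simp only: h(2) one(2))
  then have "AE u in lborel. indicator {0..1} u * h u = indicator {0..1} u * (\<lambda>_. 1) u"
    by (subst (asm) sigma_finite_measure.density_unique_iff[OF lborel.sigma_finite_measure_axioms]) auto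
  then show ?thesis
    by eventually_elim (auto simp: indicator_def)
qed

lemma copula_density_row_integral:
  assumes cop: "copula_density c"
  shows "AE u in lborel. 0 < u \<and> u < 1 \<longrightarrow>
           (\<integral>\<^sup>+ v. indicator {0..1} v * ennreal (c u v) \<partial>lborel) = 1"
proof -
  have [measurable]: "(\<lambda>w. c (fst w) (snd w)) \<in> borel_measurable (lborel \<Otimes>\<^sub>M lborel)"
    using cop by (simp add: copula_density_def)
  define g where "g u = (\<integral>\<^sup>+ v. indicator {0..1} v * ennreal (c u v) \<partial>lborel)" for u
  have "(\<lambda>w. indicator {0..1} (snd w) * ennreal (c (fst w) (snd w)))
      \<in> borel_measurable (lborel \<Otimes>\<^sub>M lborel)"
    by measurable
  then have "g \<in> borel_measurable lborel"
    unfolding g_def using lborel.borel_measurable_nn_integral_fst by auto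
  then have "g \<in> borel_measurable borel" by (simp add: measurable_lborel1)
  moreover have "(\<integral>\<^sup>+ u. indicator {0..a} u * g u \<partial>lborel) = ennreal a" if "0 \<le> a" "a \<le> 1" for a
    using cop that biv_cdf_iterated_fst[of c a 1] by (simp add: copula_density_def g_def)
  ultimately have "AE u in lborel. u \<in> {0..1} \<longrightarrow> g u = 1"
    by (rule AE_eq_1_if_interval_integrals)
  then show ?thesis by eventually_elim (simp add: g_def)
qed

section \<open>One step of the predictive sequence\<close>

text \<open>Obtained by solving q z y = c (P y) (P z) * p y at y = Q u, z = Q v; the default value 1
  is only taken on a null set of the unit square.\<close>

definition update_copula :: "(real \<Rightarrow> real) \<Rightarrow> (real \<Rightarrow> real \<Rightarrow> real) \<Rightarrow> real \<Rightarrow> real \<Rightarrow> real" where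
  "update_copula p q u v =
     (if 0 < u \<and> u < 1 \<and> 0 < v \<and> v < 1 \<and> 0 < p (dens_quantile p u)
      then q (dens_quantile p v) (dens_quantile p u) / p (dens_quantile p u) else 1)"

definition martingale_step :: "(real \<Rightarrow> real) \<Rightarrow> (real \<Rightarrow> real \<Rightarrow> real) \<Rightarrow> bool" where
  "martingale_step p q \<longleftrightarrow> (AE y in lborel. (\<integral>z. q z y * p z \<partial>lborel) = p y)"

definition copula_update ::
    "(real \<Rightarrow> real) \<Rightarrow> (real \<Rightarrow> real \<Rightarrow> real) \<Rightarrow> (real \<Rightarrow> real \<Rightarrow> real) \<Rightarrow> bool" where
  "copula_update p q c \<longleftrightarrow> (AE w in lborel \<Otimes>\<^sub>M lborel. p (snd w) \<noteq> 0 \<longrightarrow>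
     q (snd w) (fst w) = c (dens_cdf p (fst w)) (dens_cdf p (snd w)) * p (fst w))"

locale density_update = real_density p for p :: "real \<Rightarrow> real" +
  fixes q :: "real \<Rightarrow> real \<Rightarrow> real"
  assumes prob_density_q: "\<And>z. prob_density (q z)"
    and borel_measurable_q_pair: "(\<lambda>w. q (snd w) (fst w)) \<in> borel_measurable (lborel \<Otimes>\<^sub>M lborel)"
begin

abbreviation "C \<equiv> update_copula p q"

lemma borel_measurable_q[measurable (raw)]:
  assumes "f \<in> borel_measurable M" "g \<in> borel_measurable M"
  shows "(\<lambda>x. q (g x) (f x)) \<in> borel_measurable M"
proof -
  have "(\<lambda>w. q (snd w) (fst w)) \<in> borel_measurable (borel \<Otimes>\<^sub>M borel)"
    using borel_measurable_q_pair by (simp add: measurable_lborel1 cong: measurable_cong_sets)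
  with assms show ?thesis
    using measurable_compose[of "\<lambda>x. (f x, g x)" M "borel \<Otimes>\<^sub>M borel" "\<lambda>w. q (snd w) (fst w)"]
    by simp
qed

lemma borel_measurable_update_copula[measurable (raw)]:
  assumes [measurable]: "f \<in> borel_measurable M" "g \<in> borel_measurable M"
  shows "(\<lambda>x. C (f x) (g x)) \<in> borel_measurable M"
  unfolding update_copula_def by measurable

lemma q_nonneg: "0 \<le> q z y"
  using real_density.p_nonneg[OF real_density.intro, OF prob_density_q] .

lemma nn_integral_q: "(\<integral>\<^sup>+ y. ennreal (q z y) \<partial>lborel) = 1"
  using real_density.nn_integral_p[OF real_density.intro, OF prob_density_q] .

lemma nn_integral_joint_eq_1: "(\<integral>\<^sup>+ y. \<integral>\<^sup>+ z. ennreal (q z y * p z) \<partial>lborel \<partial>lborel) = 1"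
proof -
  have "(\<integral>\<^sup>+ y. \<integral>\<^sup>+ z. ennreal (q z y * p z) \<partial>lborel \<partial>lborel)
      = (\<integral>\<^sup>+ z. \<integral>\<^sup>+ y. ennreal (q z y * p z) \<partial>lborel \<partial>lborel)"
    by (subst lborel_pair.Fubini') auto
  also have "\<dots> = (\<integral>\<^sup>+ z. ennreal (p z) * \<integral>\<^sup>+ y. ennreal (q z y) \<partial>lborel \<partial>lborel)"
    by (intro nn_integral_cong)
      (auto simp: ennreal_mult p_nonneg q_nonneg mult.commute nn_integral_cmult)
  finally show ?thesis by (simp add: nn_integral_q nn_integral_p)
qed

lemma nn_integral_if_martingale_step:
  assumes "martingale_step p q"
  shows "AE y in lborel. (\<integral>\<^sup>+ z. ennreal (q z y * p z) \<partial>lborel) = ennreal (p y)"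
proof -
  have "AE y in lborel. (\<integral>\<^sup>+ z. ennreal (q z y * p z) \<partial>lborel) \<noteq> \<infinity>"
    by (rule nn_integral_PInf_AE) (auto simp: nn_integral_joint_eq_1)
  with assms show ?thesis
    unfolding martingale_step_def
  proof eventually_elim
    case (elim y)
    then have "integrable lborel (\<lambda>z. q z y * p z)"
      by (intro integrableI_nonneg) (auto simp: q_nonneg p_nonneg top.not_eq_extremum)
    with elim show ?case
      by (subst nn_integral_eq_integral) (auto simp: q_nonneg p_nonneg)
  qed
qed

text \<open>This makes the representation hold at points y with p y = 0, whatever the copula.\<close>

lemma martingale_step_zero:
  assumes "martingale_step p q"
  shows "AE y in lborel. p y = 0 \<longrightarrow> (AE z in lborel. 0 < p z \<longrightarrow> q z y = 0)"
  using nn_integral_if_martingale_step[OF assms]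
proof eventually_elim
  case (elim y)
  show ?case
  proof
    assume "p y = 0"
    then have "AE z in lborel. ennreal (q z y * p z) = 0"
      using elim by (subst nn_integral_0_iff_AE[symmetric]) auto
    then show "AE z in lborel. 0 < p z \<longrightarrow> q z y = 0"
      by eventually_elim (use q_nonneg[of _ y] p_nonneg in \<open>auto simp: mult_le_0_iff\<close>)
  qed
qed

lemma copula_update_update_copula:
  assumes "martingale_step p q"
  shows "copula_update p q C"
proof -
  have "AE y in lborel. AE z in lborel. p z \<noteq> 0 \<longrightarrow> q z y = C (P y) (P z) * p y"
    using AE_dens_quantile_dens_cdf martingale_step_zero[OF assms]
  proof eventually_elim
    case (elim y)
    show ?case
    proof (cases "p y = 0")
      case True
      with elim(2) show ?thesis
        by (auto simp: less_le p_nonneg elim!: eventually_mono)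
    next
      case False
      then have py: "0 < p y" using p_nonneg[of y] by simp
      with elim(1) have y: "Q (P y) = y" "0 < P y" "P y < 1" by auto
      show ?thesis using AE_dens_quantile_dens_cdf
        by eventually_elim (use py y in \<open>auto simp: update_copula_def less_le p_nonneg\<close>)
    qed
  qed
  moreover have "{w \<in> space (lborel \<Otimes>\<^sub>M lborel). p (snd w) \<noteq> 0 \<longrightarrow>
      q (snd w) (fst w) = C (P (fst w)) (P (snd w)) * p (fst w)} \<in> sets (lborel \<Otimes>\<^sub>M lborel)"
    by measurable
  ultimately show ?thesis
    unfolding copula_update_def
    using lborel_pair.AE_pair_iff[of "\<lambda>y z. p z \<noteq> 0 \<longrightarrow> q z y = C (P y) (P z) * p y"] by simp
qed

lemma update_copula_row_integral:
  assumes "martingale_step p q"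
  shows "AE u in lborel. 0 < u \<and> u < 1 \<longrightarrow>
           (\<integral>\<^sup>+ v. indicator {0..1} v * ennreal (C u v) \<partial>lborel) = 1"
proof -
  have "AE u in lborel. 0 < u \<and> u < 1 \<longrightarrow>
      0 < p (Q u) \<and> (\<integral>\<^sup>+ z. ennreal (q z (Q u) * p z) \<partial>lborel) = ennreal (p (Q u))"
    by (rule AE_dens_quantile_if_AE)
      (use nn_integral_if_martingale_step[OF assms] in \<open>auto elim: eventually_mono\<close>)
  then show ?thesis using AE_lborel_not_0_1
  proof eventually_elim
    case (elim u)
    show ?case
    proof
      assume u: "0 < u \<and> u < 1"
      define y where "y = Q u"
      with elim u have py: "0 < p y"
        and integral_y: "(\<integral>\<^sup>+ z. ennreal (q z y * p z) \<partial>lborel) = ennreal (p y)"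
        by auto
      have "(\<integral>\<^sup>+ v. indicator {0..1} v * ennreal (C u v) \<partial>lborel)
          = (\<integral>\<^sup>+ v. indicator {0<..<1} v * ennreal (q (Q v) y / p y) \<partial>lborel)"
        by (rule nn_integral_cong_AE[OF eventually_mono[OF AE_lborel_not_0_1]])
          (use u py in \<open>auto simp: update_copula_def y_def indicator_def\<close>)
      also have "\<dots> = (\<integral>\<^sup>+ z. ennreal (p z) * ennreal (q z y / p y) \<partial>lborel)"
        by (subst nn_integral_dens_quantile_subst) auto
      also have "\<dots> = (\<integral>\<^sup>+ z. ennreal (q z y * p z) * ennreal (1 / p y) \<partial>lborel)"
        using py by (intro nn_integral_cong) (auto simp: ennreal_mult[symmetric] q_nonneg p_nonneg)
      also have "\<dots> = 1"
        using py by (subst nn_integral_multc) (auto simp: integral_y ennreal_mult[symmetric])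
      finally show "(\<integral>\<^sup>+ v. indicator {0..1} v * ennreal (C u v) \<partial>lborel) = 1" .
    qed
  qed
qed

lemma biv_cdf_update_copula_right_1:
  assumes "martingale_step p q" and "0 \<le> a" "a \<le> 1"
  shows "biv_cdf C a 1 = ennreal a"
proof -
  have "biv_cdf C a 1 = (\<integral>\<^sup>+ u. indicator {0..a} u *
            (\<integral>\<^sup>+ v. indicator {0..1} v * ennreal (C u v) \<partial>lborel) \<partial>lborel)"
    by (rule biv_cdf_iterated_fst) measurable
  also have "\<dots> = (\<integral>\<^sup>+ u. indicator {0..a} u \<partial>lborel)"
    using update_copula_row_integral[OF assms(1)] AE_lborel_not_0_1
    by (intro nn_integral_cong_AE, eventually_elim) (use assms(2,3) in \<open>auto simp: indicator_def\<close>)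
  finally show ?thesis using assms(2,3) by simp
qed

lemma update_copula_column_le_1: "(\<integral>\<^sup>+ u. indicator {0..1} u * ennreal (C u v) \<partial>lborel) \<le> 1"
proof (cases "0 < v \<and> v < 1")
  case False
  then have "(\<integral>\<^sup>+ u. indicator {0..1} u * ennreal (C u v) \<partial>lborel)
      = (\<integral>\<^sup>+ u. indicator {0..1::real} u \<partial>lborel)"
    by (intro nn_integral_cong) (auto simp: update_copula_def)
  then show ?thesis by simp
next
  case True
  define z where "z = Q v"
  define g where "g y = (if 0 < p y then q z y / p y else 1)" for y
  have [measurable]: "g \<in> borel_measurable borel" unfolding g_def by measurable
  have "(\<integral>\<^sup>+ u. indicator {0..1} u * ennreal (C u v) \<partial>lborel)
      = (\<integral>\<^sup>+ u. indicator {0<..<1} u * ennreal (g (Q u)) \<partial>lborel)"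
    by (rule nn_integral_cong_AE[OF eventually_mono[OF AE_lborel_not_0_1]])
      (use True in \<open>auto simp: update_copula_def g_def z_def indicator_def\<close>)
  also have "\<dots> = (\<integral>\<^sup>+ y. ennreal (p y) * ennreal (g y) \<partial>lborel)"
    by (subst nn_integral_dens_quantile_subst) auto
  also have "\<dots> \<le> (\<integral>\<^sup>+ y. ennreal (q z y) \<partial>lborel)"
    by (intro nn_integral_mono)
      (auto simp: g_def ennreal_mult[symmetric] q_nonneg less_le p_nonneg)
  finally show ?thesis by (simp add: nn_integral_q)
qed

lemma biv_cdf_update_copula_left_1:
  assumes "martingale_step p q" and "0 \<le> a" "a \<le> 1"
  shows "biv_cdf C 1 a = ennreal a"
proof -
  have C_measurable: "(\<lambda>w. C (fst w) (snd w)) \<in> borel_measurable (lborel \<Otimes>\<^sub>M lborel)"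
    by measurable
  have "(\<integral>\<^sup>+ v. indicator {0..1} v * (\<integral>\<^sup>+ u. indicator {0..1} u * ennreal (C u v) \<partial>lborel) \<partial>lborel)
      = 1"
    using biv_cdf_update_copula_right_1[OF assms(1), of 1] biv_cdf_iterated_snd[OF C_measurable, of 1 1]
    by simp
  then show ?thesis
    unfolding biv_cdf_iterated_snd[OF C_measurable]
    by (intro nn_integral_interval_eq_if_le_1 update_copula_column_le_1 assms(2,3)) measurable
qed

lemma copula_density_update_copula:
  assumes "martingale_step p q"
  shows "copula_density C"
  unfolding copula_density_def
  using biv_cdf_update_copula_right_1[OF assms] biv_cdf_update_copula_left_1[OF assms]
  by (auto simp: update_copula_def q_nonneg p_nonneg)

lemma copula_update_unique:
  assumes "copula_density c" "copula_density c'" "copula_update p q c" "copula_update p q c'"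
  shows "AE w in lborel \<Otimes>\<^sub>M lborel. w \<in> {0..1} \<times> {0..1} \<longrightarrow> c' (fst w) (snd w) = c (fst w) (snd w)"
proof -
  have [measurable]: "(\<lambda>w. c (fst w) (snd w)) \<in> borel_measurable (borel \<Otimes>\<^sub>M borel)"
      "(\<lambda>w. c' (fst w) (snd w)) \<in> borel_measurable (borel \<Otimes>\<^sub>M borel)"
    using assms(1,2)
    by (simp_all add: copula_density_def measurable_lborel1 cong: measurable_cong_sets)
  have "{w \<in> space (borel \<Otimes>\<^sub>M borel). c' (fst w) (snd w) = c (fst w) (snd w)} \<in> sets (borel \<Otimes>\<^sub>M borel)"
    by measurable
  then have "AE w in lborel \<Otimes>\<^sub>M lborel. 0 < fst w \<and> fst w < 1 \<and> 0 < snd w \<and> snd w < 1 \<longrightarrow>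
      c' (fst w) (snd w) = c (fst w) (snd w)"
    using assms(3,4) unfolding copula_update_def
    by (intro AE_pair_uniform_if_AE_pair_dens_cdf[where E="\<lambda>w. c' (fst w) (snd w) = c (fst w) (snd w)"])
      (auto simp: space_pair_measure elim!: eventually_rev_mp)
  then show ?thesis using AE_pair_lborel_not_0_1 by eventually_elim (auto simp: less_le)
qed

lemma martingale_step_if_copula_update:
  assumes c: "copula_density c" and "copula_update p q c"
  shows "martingale_step p q"
proof -
  have [measurable]: "(\<lambda>w. c (fst w) (snd w)) \<in> borel_measurable (borel \<Otimes>\<^sub>M borel)"
    using c by (simp add: copula_density_def measurable_lborel1 cong: measurable_cong_sets)
  have c_nonneg: "0 \<le> c (P y) (P z)" for y z
    using c dens_cdf_nonneg dens_cdf_le_1 by (simp add: copula_density_def)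
  have "AE w in lborel \<Otimes>\<^sub>M lborel.
      q (snd w) (fst w) * p (snd w) = p (fst w) * (c (P (fst w)) (P (snd w)) * p (snd w))"
    using assms(2) unfolding copula_update_def by eventually_elim auto
  then have "AE y in lborel. AE z in lborel. q z y * p z = p y * (c (P y) (P z) * p z)"
    by (auto dest: lborel_pair.AE_pair)
  moreover have "AE y in lborel. 0 < p y \<longrightarrow>
      (\<integral>\<^sup>+ v. indicator {0..1} v * ennreal (c (P y) v) \<partial>lborel) = 1"
    by (rule AE_dens_cdf_if_AE[OF _ copula_density_row_integral[OF c]]) measurable
  ultimately show ?thesis
    unfolding martingale_step_def
  proof eventually_elim
    case (elim y)
    have [measurable]: "c (P y) \<in> borel_measurable borel"
      using measurable_Pair2[of "\<lambda>w. c (fst w) (snd w)" borel borel borel "P y"] by simp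
    have "(\<integral>z. q z y * p z \<partial>lborel) = p y * (\<integral>z. c (P y) (P z) * p z \<partial>lborel)"
      using elim(1) by (subst integral_cong_AE[where g="\<lambda>z. p y * (c (P y) (P z) * p z)"]) auto
    also have "\<dots> = p y"
    proof (cases "p y = 0")
      case False
      then have "0 < p y" using p_nonneg[of y] by simp
      have "(\<integral>\<^sup>+ z. ennreal (c (P y) (P z) * p z) \<partial>lborel)
          = (\<integral>\<^sup>+ z. ennreal (p z) * ennreal (c (P y) (P z)) \<partial>lborel)"
        by (intro nn_integral_cong) (simp add: ennreal_mult[symmetric] c_nonneg p_nonneg mult.commute)
      also have "\<dots> = (\<integral>\<^sup>+ v. indicator {0<..<1} v * ennreal (c (P y) v) \<partial>lborel)"
        by (rule nn_integral_dens_cdf_subst) measurable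
      also have "\<dots> = (\<integral>\<^sup>+ v. indicator {0..1} v * ennreal (c (P y) v) \<partial>lborel)"
        by (rule nn_integral_cong_AE[OF eventually_mono[OF AE_lborel_not_0_1]])
          (auto simp: indicator_def)
      also have "\<dots> = 1" using elim(2) \<open>0 < p y\<close> by simp
      finally have "(\<integral>z. c (P y) (P z) * p z \<partial>lborel) = 1"
        by (subst integral_eq_nn_integral) (auto simp: c_nonneg p_nonneg)
      then show ?thesis by simp
    qed simp
    finally show ?case .
  qed
qed

end

section \<open>The predictive sequence\<close>

lemma martingale_cond_iff_martingale_step:
  "martingale_cond p \<longleftrightarrow>
     (\<forall>i ys. length ys = i \<longrightarrow> martingale_step (p i ys) (\<lambda>z. p (Suc i) (ys @ [z])))"
  unfolding martingale_cond_def martingale_step_def ..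

lemma copula_rep_iff_copula_update:
  "copula_rep p c \<longleftrightarrow> (\<forall>i ys. length ys = i \<longrightarrow> copula_density (c (Suc i) ys) \<and>
     copula_update (p i ys) (\<lambda>z. p (Suc i) (ys @ [z])) (c (Suc i) ys))"
  unfolding copula_rep_def copula_update_def ..

context
  fixes p :: "nat \<Rightarrow> real list \<Rightarrow> real \<Rightarrow> real"
  assumes step: "\<And>i ys. length ys = i \<Longrightarrow> density_update (p i ys) (\<lambda>z. p (Suc i) (ys @ [z]))"
begin

lemma copula_rep_update_copula:
  assumes "martingale_cond p"
  shows "copula_rep p (\<lambda>k ys. update_copula (p (k - 1) ys) (\<lambda>z. p k (ys @ [z])))"
  unfolding copula_rep_iff_copula_update
proof (intro allI impI)
  fix i and ys :: "real list"
  assume "length ys = i"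
  then interpret density_update "p i ys" "\<lambda>z. p (Suc i) (ys @ [z])" by (rule step)
  from \<open>length ys = i\<close> assms have "martingale_step (p i ys) (\<lambda>z. p (Suc i) (ys @ [z]))"
    unfolding martingale_cond_iff_martingale_step by blast
  then show "copula_density (update_copula (p (Suc i - 1) ys) (\<lambda>z. p (Suc i) (ys @ [z]))) \<and>
      copula_update (p i ys) (\<lambda>z. p (Suc i) (ys @ [z]))
        (update_copula (p (Suc i - 1) ys) (\<lambda>z. p (Suc i) (ys @ [z])))"
    by (simp add: copula_density_update_copula copula_update_update_copula)
qed

lemma copula_rep_unique:
  assumes "copula_rep p c" "copula_rep p c'" "length ys = i"
  shows "AE w in lborel \<Otimes>\<^sub>M lborel. w \<in> {0..1} \<times> {0..1} \<longrightarrow>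
           c' (Suc i) ys (fst w) (snd w) = c (Suc i) ys (fst w) (snd w)"
  using assms unfolding copula_rep_iff_copula_update
  by (intro density_update.copula_update_unique[OF step[OF assms(3)]]) auto

lemma martingale_cond_if_copula_rep:
  assumes "copula_rep p c"
  shows "martingale_cond p"
  using assms unfolding martingale_cond_iff_martingale_step copula_rep_iff_copula_update
  by (auto intro: density_update.martingale_step_if_copula_update[OF step])

end

theorem corollary1:
  fixes p :: "nat \<Rightarrow> real list \<Rightarrow> real \<Rightarrow> real"
  assumes dens: "\<forall>i ys. length ys = i \<longrightarrow> prob_density (p i ys)"
    and meas: "\<forall>i ys. length ys = i \<longrightarrow>
      (\<lambda>w. p (Suc i) (ys @ [snd w]) (fst w)) \<in> borel_measurable (lborel \<Otimes>\<^sub>M lborel)"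
  shows "martingale_cond p \<longleftrightarrow>
    (\<exists>c. copula_rep p c \<and>
       (\<forall>c'. copula_rep p c' \<longrightarrow>
          (\<forall>i ys. length ys = i \<longrightarrow>
             (AE w in lborel \<Otimes>\<^sub>M lborel. w \<in> {0..1} \<times> {0..1} \<longrightarrow>
                c' (Suc i) ys (fst w) (snd w) = c (Suc i) ys (fst w) (snd w)))))"
proof -
  have step: "density_update (p i ys) (\<lambda>z. p (Suc i) (ys @ [z]))" if "length ys = i" for i ys
  proof unfold_locales
    show "prob_density (p i ys)" "\<And>z. prob_density (p (Suc i) (ys @ [z]))"
      using dens that by (metis length_append_singleton)+
    show "(\<lambda>w. p (Suc i) (ys @ [snd w]) (fst w)) \<in> borel_measurable (lborel \<Otimes>\<^sub>M lborel)"
      using meas that by blast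
  qed
  show ?thesis
    using copula_rep_update_copula[of p, OF step] copula_rep_unique[of p, OF step]
      martingale_cond_if_copula_rep[of p, OF step]
    by blast
qed

end
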